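(* In the setting of the context, as $n\to\infty$, $$\mathbf P[K_0\ge h_n]\sim C_a\,\mathbf f'(q)^{h_n},\qquad C_a=\alpha q\,\frac{\mathbf m-\mathbf f'(q)}{1-q}.$$
   Context: $(p_k)_{k\ge0}$ is a probability distribution on $\{0,1,\dots\}$ with generating function $\mathbf f$, $p_0>0$, $\mathbf m:=\mathbf f'(1)\in(1,\infty)$, $\sum k^2p_k<\infty$; $q\in(0,1)$ is the extinction probability ($\mathbf f(q)=q$), so $0<\mathbf f'(q)<1$. $\mathbf P$ is the law of a Galton–Watson tree $T$ with offspring law $(p_k)$ and root $0$, conditioned on non-extinction. The backbone is the set of vertices with infinitely many descendants; a bud is a non-backbone child of a backbone vertex; for a bud child $y$ of a backbone vertex $x$, the trap rooted at $x$ consists of $x$, $y$ and the descendants of $y$, and its height is the largest distance from $y$ to a descendant of $y$. $K_0$ is the maximal height of a trap rooted at $0$ ($K_0=-\infty$ if there is none). $\mathbf Q$ is the law of a Galton–Watson tree with offspring law $q_k=p_kq^{k-1}$, $H$ its height, and $\alpha=\lim_n\mathbf Q[H\ge n]/\mathbf f'(q)^n\in(0,\infty)$ (this limit exists). For a fixed $\varepsilon\in(0,1)$, $h_n=\lceil(1-\varepsilon)\ln n/(-\ln\mathbf f'(q))\rceil$. *)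

theory Defs
  imports "HOL-Probability.Probability" "HOL-Library.Landau_Symbols"
begin

text \<open>Galton--Watson trees in Ulam--Harris encoding: a sample point
 \<open>\<omega> :: nat list \<Rightarrow> nat\<close> assigns to every word its number of children; the
 offspring numbers are i.i.d. with law \<open>p\<close>. The root is \<open>[]\<close>, the children
 of \<open>u\<close> are \<open>u @ [i]\<close> with \<open>i < \<omega> u\<close>.\<close>

definition gw_space :: "nat pmf \<Rightarrow> (nat list \<Rightarrow> nat) measure" where
  "gw_space p = PiM UNIV (\<lambda>_. measure_pmf p)"

definition gw_tree :: "(nat list \<Rightarrow> nat) \<Rightarrow> nat list set" where
  "gw_tree \<omega> = {u. \<forall>j < length u. u ! j < \<omega> (take j u)}"

definition desc :: "(nat list \<Rightarrow> nat) \<Rightarrow> nat list \<Rightarrow> nat list set" where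
  "desc \<omega> u = {v \<in> gw_tree \<omega>. \<exists>w. v = u @ w}"

definition survives :: "(nat list \<Rightarrow> nat) \<Rightarrow> bool" where
  "survives \<omega> \<longleftrightarrow> infinite (gw_tree \<omega>)"

definition backbone :: "(nat list \<Rightarrow> nat) \<Rightarrow> nat list set" where
  "backbone \<omega> = {u \<in> gw_tree \<omega>. infinite (desc \<omega> u)}"

definition buds :: "(nat list \<Rightarrow> nat) \<Rightarrow> nat list \<Rightarrow> nat set" where
  "buds \<omega> x = {i. x \<in> backbone \<omega> \<and> i < \<omega> x \<and> x @ [i] \<notin> backbone \<omega>}"

definition trap_height :: "(nat list \<Rightarrow> nat) \<Rightarrow> nat list \<Rightarrow> nat \<Rightarrow> nat" where
  "trap_height \<omega> x i = Max {length w | w. x @ [i] @ w \<in> gw_tree \<omega>}"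

definition K0 :: "(nat list \<Rightarrow> nat) \<Rightarrow> ereal" where
  "K0 \<omega> = (if buds \<omega> [] = {} then -\<infinity>
            else ereal (real (Max (trap_height \<omega> [] ` buds \<omega> []))))"

definition tree_height :: "(nat list \<Rightarrow> nat) \<Rightarrow> enat" where
  "tree_height \<omega> = (SUP u \<in> gw_tree \<omega>. enat (length u))"

definition gf :: "nat pmf \<Rightarrow> real \<Rightarrow> real" where
  "gf p x = (\<Sum>k. pmf p k * x ^ k)"

definition gf_deriv :: "nat pmf \<Rightarrow> real \<Rightarrow> real" where
  "gf_deriv p x = (\<Sum>k. real k * pmf p k * x ^ (k - 1))"

definition mean :: "nat pmf \<Rightarrow> real" where
  "mean p = (\<Sum>k. real k * pmf p k)"

definition ext_prob :: "nat pmf \<Rightarrow> real" where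
  "ext_prob p = measure (gw_space p) {\<omega> \<in> space (gw_space p). \<not> survives \<omega>}"

definition Pcond :: "nat pmf \<Rightarrow> (nat list \<Rightarrow> nat) set \<Rightarrow> real" where
  "Pcond p A = measure (gw_space p) (A \<inter> {\<omega> \<in> space (gw_space p). survives \<omega>})
               / measure (gw_space p) {\<omega> \<in> space (gw_space p). survives \<omega>}"

definition Qlaw :: "nat pmf \<Rightarrow> nat pmf" where
  "Qlaw p = embed_pmf (\<lambda>k. pmf p k * ext_prob p powi (int k - 1))"

end

theory Submission
  imports Defs
begin

text \<open>
  On survival, \<open>K\<^sub>0 \<ge> h\<close> means that the root has an infinite subtree and a finite subtree of
  height at least \<open>h\<close>. Since the offspring number of the root and the subtrees of its children are
  independent, inclusion--exclusion turns this into
  \<open>P[survival, K\<^sub>0 \<ge> h] = 1 - f(q) - f(1 - a\<^sub>h) + f\<^sup>h\<^sup>+\<^sup>1(0)\<close> with \<open>a\<^sub>h = q - f\<^sup>h(0)\<close> (\<open>gap h\<close> below),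
  and second-order Taylor bounds for \<open>f\<close> at \<open>1\<close> and at \<open>q\<close> give
  \<open>(m - f'(q)) a\<^sub>h + O(a\<^sub>h\<^sup>2)\<close>. The offspring law \<open>q\<^sub>k\<close> has generating function \<open>f(qs)/q\<close>,
  so \<open>Q[H \<ge> h] = a\<^sub>h / q\<close> and by hypothesis \<open>a\<^sub>h \<sim> \<alpha> q f'(q)\<^sup>h\<close>. The recursion
  \<open>a\<^sub>h\<^sub>+\<^sub>1 \<ge> f'(q) a\<^sub>h - O(a\<^sub>h\<^sup>2)\<close> shows that \<open>a\<^sub>h / f'(q)\<^sup>h\<close> stays bounded away from \<open>0\<close>,
  so \<open>\<alpha> > 0\<close>, and the asymptotics hold along any sequence \<open>h\<^sub>n \<rightarrow> \<infinity>\<close>.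
\<close>

section \<open>Subtrees of the root\<close>

definition subtree :: "nat \<Rightarrow> (nat list \<Rightarrow> nat) \<Rightarrow> nat list \<Rightarrow> nat" where
  "subtree i \<omega> = (\<lambda>u. \<omega> (i # u))"

definition subtrees_in :: "(nat list \<Rightarrow> nat) set \<Rightarrow> (nat list \<Rightarrow> nat) set" where
  "subtrees_in B = {\<omega>. \<forall>i < \<omega> []. subtree i \<omega> \<in> B}"

definition height_less :: "nat \<Rightarrow> (nat list \<Rightarrow> nat) set" where
  "height_less h = {\<omega>. \<forall>u \<in> gw_tree \<omega>. length u < h}"

definition extinct :: "(nat list \<Rightarrow> nat) set" where
  "extinct = {\<omega>. finite (gw_tree \<omega>)}"

lemma Nil_in_gw_tree [simp]: "[] \<in> gw_tree \<omega>"
  by (simp add: gw_tree_def)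

lemma gw_tree_not_empty [simp]: "gw_tree \<omega> \<noteq> {}"
  using Nil_in_gw_tree by blast

lemma Cons_in_gw_tree_iff: "i # w \<in> gw_tree \<omega> \<longleftrightarrow> i < \<omega> [] \<and> w \<in> gw_tree (subtree i \<omega>)"
  unfolding gw_tree_def subtree_def by (simp add: All_less_Suc2)

lemma gw_tree_decomp: "gw_tree \<omega> = insert [] (\<Union>i < \<omega> []. Cons i ` gw_tree (subtree i \<omega>))"
proof (intro set_eqI iffI)
  fix u assume "u \<in> gw_tree \<omega>"
  then show "u \<in> insert [] (\<Union>i < \<omega> []. Cons i ` gw_tree (subtree i \<omega>))"
    by (cases u) (auto simp: Cons_in_gw_tree_iff)
qed (auto simp: Cons_in_gw_tree_iff)

lemma extinct_eq_subtrees_in: "extinct = subtrees_in extinct"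
proof -
  have "finite (gw_tree \<omega>) \<longleftrightarrow> (\<forall>i < \<omega> []. finite (gw_tree (subtree i \<omega>)))" for \<omega>
  proof -
    have "finite (gw_tree \<omega>) \<longleftrightarrow> finite (\<Union>i < \<omega> []. Cons i ` gw_tree (subtree i \<omega>))"
      by (subst gw_tree_decomp) simp
    then show ?thesis by (auto simp: finite_image_iff)
  qed
  then show ?thesis unfolding extinct_def subtrees_in_def by blast
qed

lemma height_less_0: "height_less 0 = {}"
  by (auto simp: height_less_def)

lemma height_less_Suc: "height_less (Suc h) = subtrees_in (height_less h)"
  unfolding height_less_def subtrees_in_def by (subst gw_tree_decomp) auto

lemma incseq_height_less: "incseq height_less"
  by (auto simp: incseq_def height_less_def)

lemma extinct_eq_UN_height_less: "extinct = (\<Union>h. height_less h)"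
proof (intro set_eqI iffI)
  fix \<omega> assume "\<omega> \<in> extinct"
  then have "\<omega> \<in> height_less (Suc (Max (length ` gw_tree \<omega>)))"
    by (auto simp: extinct_def height_less_def intro!: le_imp_less_Suc)
  then show "\<omega> \<in> (\<Union>h. height_less h)" by blast
next
  have "height_less h \<subseteq> extinct" for h
  proof (induction h)
    case (Suc h)
    then show ?case
      unfolding height_less_Suc by (subst extinct_eq_subtrees_in) (auto simp: subtrees_in_def)
  qed (simp add: height_less_0)
  then show "\<omega> \<in> (\<Union>h. height_less h) \<Longrightarrow> \<omega> \<in> extinct" for \<omega> by blast
qed

lemma height_less_subset_extinct: "height_less h \<subseteq> extinct"
  unfolding extinct_eq_UN_height_less by blast

lemma tree_height_ge_iff: "enat h \<le> tree_height \<omega> \<longleftrightarrow> \<omega> \<notin> height_less h"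
proof
  assume ge: "enat h \<le> tree_height \<omega>"
  show "\<omega> \<notin> height_less h"
  proof
    assume "\<omega> \<in> height_less h"
    then have all: "\<forall>u \<in> gw_tree \<omega>. length u < h" by (simp add: height_less_def)
    then have "h \<noteq> 0" using Nil_in_gw_tree[of \<omega>] by fastforce
    have "tree_height \<omega> \<le> enat (h - 1)"
      unfolding tree_height_def using all by (intro SUP_least) auto
    then show False using ge \<open>h \<noteq> 0\<close> by (cases "tree_height \<omega>") auto
  qed
next
  assume "\<omega> \<notin> height_less h"
  then obtain u where u: "u \<in> gw_tree \<omega>" "h \<le> length u" by (auto simp: height_less_def not_less)
  have "enat h \<le> enat (length u)" using u by simp
  also have "\<dots> \<le> tree_height \<omega>" unfolding tree_height_def using u by (intro SUP_upper)
  finally show "enat h \<le> tree_height \<omega>" .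
qed

lemma K0_ge_iff:
  assumes "survives \<omega>"
  shows "ereal (real h) \<le> K0 \<omega> \<longleftrightarrow> (\<exists>i < \<omega> []. subtree i \<omega> \<in> extinct - height_less h)"
proof -
  have desc_child: "desc \<omega> [i] = Cons i ` gw_tree (subtree i \<omega>)" if "i < \<omega> []" for i
    using that by (auto simp: desc_def Cons_in_gw_tree_iff)
  have "[] \<in> backbone \<omega>"
    using assms by (simp add: backbone_def desc_def survives_def)
  then have buds: "buds \<omega> [] = {i. i < \<omega> [] \<and> subtree i \<omega> \<in> extinct}"
    by (auto simp: buds_def backbone_def desc_child
        Cons_in_gw_tree_iff finite_image_iff extinct_def)
  have trap_height_ge: "h \<le> trap_height \<omega> [] i \<longleftrightarrow> subtree i \<omega> \<notin> height_less h"
    if "i \<in> buds \<omega> []" for i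
  proof -
    have "{length w |w. [] @ [i] @ w \<in> gw_tree \<omega>} = length ` gw_tree (subtree i \<omega>)"
      using that buds by (auto simp: Cons_in_gw_tree_iff)
    then have "h \<le> trap_height \<omega> [] i \<longleftrightarrow> (\<exists>u \<in> gw_tree (subtree i \<omega>). h \<le> length u)"
      using that buds Nil_in_gw_tree[of "subtree i \<omega>"]
      by (subst trap_height_def, subst Max_ge_iff) (auto simp: extinct_def)
    then show ?thesis by (auto simp: height_less_def not_less)
  qed
  show ?thesis
  proof (cases "buds \<omega> [] = {}")
    case True
    then show ?thesis using buds by (auto simp: K0_def)
  next
    case False
    have "finite (buds \<omega> [])" unfolding buds by auto
    then have "ereal (real h) \<le> K0 \<omega> \<longleftrightarrow> (\<exists>i \<in> buds \<omega> []. h \<le> trap_height \<omega> [] i)"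
      using False by (simp add: K0_def Max_ge_iff)
    then show ?thesis using trap_height_ge buds by auto
  qed
qed

lemma survives_K0_ge_eq:
  "{\<omega>. survives \<omega> \<and> ereal (real h) \<le> K0 \<omega>} =
     UNIV - (subtrees_in extinct \<union> subtrees_in (UNIV - (extinct - height_less h)))"
proof -
  have "survives \<omega> \<longleftrightarrow> \<omega> \<notin> subtrees_in extinct" for \<omega>
    using extinct_eq_subtrees_in by (auto simp: survives_def extinct_def)
  then show ?thesis using K0_ge_iff by (auto simp: subtrees_in_def)
qed

section \<open>The Galton--Watson measure\<close>

lemma space_gw_space [simp]: "space (gw_space r) = UNIV"
  by (auto simp: gw_space_def space_PiM PiE_def extensional_def)

lemma prob_space_gw_space: "prob_space (gw_space r)"
  unfolding gw_space_def by (rule prob_space_PiM) (rule prob_space_measure_pmf)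

lemma measurable_subtree: "subtree i \<in> measurable (gw_space r) (gw_space r)"
proof -
  have "(\<lambda>\<omega> u. (\<lambda>u \<omega>. \<omega> (i # u)) u \<omega>) \<in>
          measurable (PiM UNIV (\<lambda>_. measure_pmf r)) (PiM UNIV (\<lambda>_. measure_pmf r))"
    by (rule measurable_PiM_single') (auto simp: space_PiM)
  then show ?thesis by (simp add: subtree_def[abs_def] gw_space_def)
qed

lemma distr_subtree: "distr (gw_space r) (gw_space r) (subtree i) = gw_space r"
proof -
  have "distr (PiM UNIV (\<lambda>_. measure_pmf r)) (PiM UNIV (\<lambda>n. (\<lambda>_. measure_pmf r) (i # n)))
          (\<lambda>\<omega>. \<lambda>n\<in>UNIV. \<omega> (i # n)) = PiM UNIV (\<lambda>n. (\<lambda>_. measure_pmf r) (i # n))"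
    by (rule distr_PiM_reindex) (auto intro: prob_space_measure_pmf)
  then show ?thesis by (simp add: gw_space_def subtree_def[abs_def] restrict_UNIV)
qed

lemma measure_subtree_in:
  assumes "B \<in> sets (gw_space r)"
  shows "measure (gw_space r) {\<omega>. subtree i \<omega> \<in> B} = measure (gw_space r) B"
proof -
  have "measure (gw_space r) B = measure (distr (gw_space r) (gw_space r) (subtree i)) B"
    by (simp add: distr_subtree)
  also have "\<dots> = measure (gw_space r) (subtree i -` B \<inter> space (gw_space r))"
    by (rule measure_distr[OF measurable_subtree assms])
  finally show ?thesis by (simp add: vimage_def)
qed

lemma measure_root_eq: "measure (gw_space r) {\<omega>. \<omega> [] = k} = pmf r k"
proof -
  interpret product_prob_space "\<lambda>_::nat list. measure_pmf r" UNIV by unfold_locales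
  have "measure (measure_pmf r) {k} = measure (distr (gw_space r) (measure_pmf r) (\<lambda>\<omega>. \<omega> [])) {k}"
    using PiM_component[of "[]"] by (simp add: gw_space_def)
  also have "\<dots> = measure (gw_space r) ((\<lambda>\<omega>. \<omega> []) -` {k} \<inter> space (gw_space r))"
    by (rule measure_distr) (auto simp: gw_space_def)
  finally show ?thesis by (simp add: measure_pmf_single vimage_def)
qed

lemma indep_vars_coordinates:
  "prob_space.indep_vars (gw_space r) (\<lambda>_. measure_pmf r) (\<lambda>u \<omega>. \<omega> u) UNIV"
proof -
  interpret G: prob_space "gw_space r" by (rule prob_space_gw_space)
  interpret product_prob_space "\<lambda>_::nat list. measure_pmf r" UNIV by unfold_locales
  have coord: "(\<lambda>\<omega>. \<omega> u) \<in> measurable (gw_space r) (measure_pmf r)" for u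
    by (simp add: gw_space_def)
  have "distr (gw_space r) (PiM UNIV (\<lambda>_. measure_pmf r)) (\<lambda>\<omega>. \<lambda>u\<in>UNIV. \<omega> u) =
          PiM UNIV (\<lambda>u. distr (gw_space r) (measure_pmf r) (\<lambda>\<omega>. \<omega> u))"
    using PiM_component distr_id2[of "gw_space r"] by (simp add: restrict_UNIV gw_space_def)
  then show ?thesis
    using G.indep_vars_iff_distr_eq_PiM[where M'="\<lambda>_. measure_pmf r" and X="\<lambda>u \<omega>. \<omega> u", OF _ coord]
    by simp
qed

definition root_or_below :: "nat option \<Rightarrow> nat list set" where
  "root_or_below j = (case j of None \<Rightarrow> {[]} | Some i \<Rightarrow> range (Cons i))"

lemma indep_vars_root_and_subtrees:
  "prob_space.indep_vars (gw_space r) (\<lambda>j. PiM (root_or_below j) (\<lambda>_. measure_pmf r))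
     (\<lambda>j \<omega>. restrict \<omega> (root_or_below j)) UNIV"
proof -
  interpret prob_space "gw_space r" by (rule prob_space_gw_space)
  show ?thesis
    by (rule indep_vars_restrict[OF indep_vars_coordinates])
      (auto simp: disjoint_family_on_def root_or_below_def split: option.splits)
qed

lemma measurable_root_block:
  "(\<lambda>f. f []) \<in> measurable (PiM (root_or_below None) (\<lambda>_. measure_pmf r)) (measure_pmf r)"
  by (rule measurable_component_singleton) (simp add: root_or_below_def)

lemma measurable_child_block:
  "(\<lambda>f u. f (i # u)) \<in> measurable (PiM (root_or_below (Some i)) (\<lambda>_. measure_pmf r)) (gw_space r)"
proof -
  have "(\<lambda>f u. (\<lambda>u f. f (i # u)) u f) \<in>
          measurable (PiM (root_or_below (Some i)) (\<lambda>_. measure_pmf r))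
          (PiM UNIV (\<lambda>_. measure_pmf r))"
    by (rule measurable_PiM_single') (auto simp: space_PiM root_or_below_def)
  then show ?thesis by (simp add: gw_space_def)
qed

lemma sets_root_eq: "{\<omega>. \<omega> [] = k} \<in> sets (gw_space r)"
  using measurable_sets[OF measurable_component_singleton[of "[]" UNIV "\<lambda>_. measure_pmf r"]
    , of "{k}"]
  by (simp add: gw_space_def vimage_def space_PiM PiE_def extensional_def)

lemma sets_root_eq_subtrees_in:
  assumes "B \<in> sets (gw_space r)"
  shows "{\<omega>. \<omega> [] = k \<and> (\<forall>i < k. subtree i \<omega> \<in> B)} \<in> sets (gw_space r)"
proof -
  have "{\<omega>. subtree i \<omega> \<in> B} \<in> sets (gw_space r)" for i
    using measurable_sets[OF measurable_subtree assms] by (simp add: vimage_def)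
  then have "{\<omega>. \<omega> [] = k} \<inter> (\<Inter>i < k. {\<omega>. subtree i \<omega> \<in> B}) \<in> sets (gw_space r)"
    using sets.top[of "gw_space r"] sets_root_eq by (intro sets.Int sets.countable_INT'') auto
  then show ?thesis by (rule back_subst) auto
qed

lemma measure_root_eq_subtrees_in:
  assumes B: "B \<in> sets (gw_space r)"
  shows "measure (gw_space r) {\<omega>. \<omega> [] = k \<and> (\<forall>i < k. subtree i \<omega> \<in> B)} =
           pmf r k * measure (gw_space r) B ^ k"
proof -
  interpret prob_space "gw_space r" by (rule prob_space_gw_space)
  define J where "J = insert None (Some ` {..<k})"
  define A where "A j = (case j of
      None \<Rightarrow> {f \<in> space (PiM (root_or_below None) (\<lambda>_. measure_pmf r)). f [] = k}
    | Some i \<Rightarrow> {f \<in> space (PiM (root_or_below (Some i)) (\<lambda>_. measure_pmf r)). (\<lambda>u. f (i # u)) \<in> B})"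
    for j
  let ?X = "\<lambda>j \<omega>. restrict \<omega> (root_or_below j)"
  have A_sets: "A j \<in> sets (PiM (root_or_below j) (\<lambda>_. measure_pmf r))" for j
    using measurable_sets[OF measurable_root_block, of "{k}" r]
          measurable_sets[OF measurable_child_block B]
    by (cases j) (simp_all add: A_def vimage_def Int_def conj_commute)
  have vimage_A: "?X j -` A j \<inter> space (gw_space r) =
      (case j of None \<Rightarrow> {\<omega>. \<omega> [] = k} | Some i \<Rightarrow> {\<omega>. subtree i \<omega> \<in> B})" for j
    by (cases j) (auto simp: A_def root_or_below_def space_PiM subtree_def[abs_def])
  have "{\<omega>. \<omega> [] = k \<and> (\<forall>i < k. subtree i \<omega> \<in> B)} = (\<Inter>j\<in>J. ?X j -` A j \<inter> space (gw_space r))"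
    unfolding vimage_A J_def by auto
  also have "measure (gw_space r) \<dots> =
      (\<Prod>j\<in>J. measure (gw_space r) (?X j -` A j \<inter> space (gw_space r)))"
    by (rule indep_varsD[OF indep_vars_root_and_subtrees]) (auto simp: J_def A_sets)
  also have "\<dots> = pmf r k * measure (gw_space r) B ^ k"
    unfolding vimage_A J_def by (simp add: prod.reindex measure_root_eq measure_subtree_in[OF B])
  finally show ?thesis .
qed

lemma sets_subtrees_in:
  assumes "B \<in> sets (gw_space r)"
  shows "subtrees_in B \<in> sets (gw_space r)"
proof -
  have "subtrees_in B = (\<Union>k. {\<omega>. \<omega> [] = k \<and> (\<forall>i < k. subtree i \<omega> \<in> B)})"
    by (auto simp: subtrees_in_def)
  then show ?thesis using sets_root_eq_subtrees_in[OF assms] by auto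
qed

text \<open>Conditioning on the offspring number of the root gives the generating function.\<close>

lemma measure_subtrees_in:
  assumes B: "B \<in> sets (gw_space r)"
  shows "measure (gw_space r) (subtrees_in B) = gf r (measure (gw_space r) B)"
proof -
  interpret prob_space "gw_space r" by (rule prob_space_gw_space)
  let ?E = "\<lambda>k. {\<omega>. \<omega> [] = k \<and> (\<forall>i < k. subtree i \<omega> \<in> B)}"
  have "(\<lambda>k. measure (gw_space r) (?E k)) sums measure (gw_space r) (\<Union>k. ?E k)"
    using sets_root_eq_subtrees_in[OF B]
    by (intro finite_measure_UNION) (auto simp: disjoint_family_on_def)
  moreover have "(\<Union>k. ?E k) = subtrees_in B"
    by (auto simp: subtrees_in_def)
  ultimately have "(\<lambda>k. pmf r k * measure (gw_space r) B ^ k)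
      sums measure (gw_space r) (subtrees_in B)"
    by (simp add: measure_root_eq_subtrees_in[OF B])
  then show ?thesis by (simp add: gf_def sums_iff)
qed

lemma sets_height_less [measurable]: "height_less h \<in> sets (gw_space r)"
  by (induction h) (simp_all add: height_less_0 height_less_Suc sets_subtrees_in)

lemma sets_extinct [measurable]: "extinct \<in> sets (gw_space r)"
  unfolding extinct_eq_UN_height_less by measurable

lemma measure_height_less: "measure (gw_space r) (height_less h) = (gf r ^^ h) 0"
  by (induction h) (simp_all add: height_less_0 height_less_Suc measure_subtrees_in)

lemma ext_prob_eq: "ext_prob r = measure (gw_space r) extinct"
  unfolding ext_prob_def extinct_def survives_def by simp

lemma gf_iterates_tendsto_ext_prob: "(\<lambda>h. (gf r ^^ h) 0) \<longlonglongrightarrow> ext_prob r"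
proof -
  interpret prob_space "gw_space r" by (rule prob_space_gw_space)
  have "(\<lambda>h. measure (gw_space r) (height_less h)) \<longlonglongrightarrow> measure (gw_space r) (\<Union>h. height_less h)"
    by (rule finite_Lim_measure_incseq) (auto simp: incseq_height_less)
  then show ?thesis by (simp add: measure_height_less ext_prob_eq extinct_eq_UN_height_less)
qed

lemma measure_survives: "measure (gw_space r) {\<omega> \<in> space (gw_space r). survives \<omega>} = 1 - ext_prob r"
proof -
  interpret prob_space "gw_space r" by (rule prob_space_gw_space)
  have "{\<omega> \<in> space (gw_space r). survives \<omega>} = space (gw_space r) - extinct"
    by (auto simp: extinct_def survives_def)
  then show ?thesis using prob_compl[OF sets_extinct] ext_prob_eq by simp
qed

lemma measure_tree_height_ge:
  "measure (gw_space r) {\<omega> \<in> space (gw_space r). enat h \<le> tree_height \<omega>} = 1 - (gf r ^^ h) 0"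
proof -
  interpret prob_space "gw_space r" by (rule prob_space_gw_space)
  have "{\<omega> \<in> space (gw_space r). enat h \<le> tree_height \<omega>} = space (gw_space r) - height_less h"
    using tree_height_ge_iff by auto
  then show ?thesis using prob_compl[OF sets_height_less] measure_height_less by simp
qed

lemma measure_survives_K0_ge:
  fixes r :: "nat pmf"
  defines "q \<equiv> ext_prob r"
  shows "measure (gw_space r) {\<omega>. survives \<omega> \<and> ereal (real h) \<le> K0 \<omega>} =
           1 - gf r q - gf r (1 - (q - (gf r ^^ h) 0)) + (gf r ^^ Suc h) 0"
proof -
  interpret prob_space "gw_space r" by (rule prob_space_gw_space)
  let ?T = "UNIV - (extinct - height_less h)"
  have T: "?T \<in> sets (gw_space r)"
    using sets.compl_sets[OF sets.Diff[OF sets_extinct sets_height_less]] by simp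
  have "measure (gw_space r) (extinct - height_less h) = q - (gf r ^^ h) 0"
    using finite_measure_Diff[OF sets_extinct sets_height_less height_less_subset_extinct]
    by (simp add: measure_height_less ext_prob_eq q_def)
  then have measure_T: "measure (gw_space r) ?T = 1 - (q - (gf r ^^ h) 0)"
    using prob_compl[OF sets.Diff[OF sets_extinct sets_height_less]] by simp
  have U: "subtrees_in extinct \<in> sets (gw_space r)" "subtrees_in ?T \<in> sets (gw_space r)"
    by (intro sets_subtrees_in sets_extinct T)+
  have "subtrees_in extinct \<inter> subtrees_in ?T = height_less (Suc h)"
    unfolding height_less_Suc using height_less_subset_extinct by (auto simp: subtrees_in_def)
  then have "measure (gw_space r) (subtrees_in extinct \<union> subtrees_in ?T) =
      gf r q + gf r (1 - (q - (gf r ^^ h) 0)) - (gf r ^^ Suc h) 0"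
    using finite_measure_Union'[OF U] finite_measure_Diff'[OF U(2,1)] U measure_T
    by (simp add: measure_subtrees_in sets_extinct T measure_height_less flip: ext_prob_eq q_def
        add: Int_commute)
  then show ?thesis
    using prob_compl[of "subtrees_in extinct \<union> subtrees_in ?T"] U by (simp add: survives_K0_ge_eq)
qed

lemma power_diff_le_deriv:
  fixes x y :: real
  assumes "0 \<le> y" "y \<le> x"
  shows "x ^ k - y ^ k \<le> real k * x ^ (k - 1) * (x - y)"
proof -
  have "(\<Sum>i<k. y ^ (k - Suc i) * x ^ i) \<le> (\<Sum>i<k. x ^ (k - 1))"
  proof (rule sum_mono)
    fix i assume "i \<in> {..<k}"
    then have "y ^ (k - Suc i) * x ^ i \<le> x ^ (k - Suc i) * x ^ i"
      using assms by (intro mult_right_mono power_mono) auto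
    also have "\<dots> = x ^ (k - 1)" using \<open>i \<in> {..<k}\<close> by (simp flip: power_add)
    finally show "y ^ (k - Suc i) * x ^ i \<le> x ^ (k - 1)" .
  qed
  then show ?thesis
    using assms by (simp add: power_diff_sumr2 mult_left_mono mult.commute)
qed

lemma power_diff_ge_deriv:
  fixes x y :: real
  assumes "0 \<le> y" "y \<le> x"
  shows "real k * y ^ (k - 1) * (x - y) \<le> x ^ k - y ^ k"
proof -
  have "(\<Sum>i<k. y ^ (k - 1)) \<le> (\<Sum>i<k. y ^ (k - Suc i) * x ^ i)"
  proof (rule sum_mono)
    fix i assume "i \<in> {..<k}"
    then have "y ^ (k - 1) = y ^ (k - Suc i) * y ^ i" by (simp flip: power_add)
    also have "\<dots> \<le> y ^ (k - Suc i) * x ^ i"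
      using assms by (intro mult_left_mono power_mono) auto
    finally show "y ^ (k - 1) \<le> y ^ (k - Suc i) * x ^ i" .
  qed
  then show ?thesis
    using assms by (simp add: power_diff_sumr2 mult_left_mono mult.commute)
qed

lemma power_diff_gt_deriv:
  fixes x y :: real
  assumes "0 \<le> y" "y < x" "2 \<le> k"
  shows "real k * y ^ (k - 1) * (x - y) < x ^ k - y ^ k"
proof -
  have "(\<Sum>i<k. y ^ (k - 1)) < (\<Sum>i<k. y ^ (k - Suc i) * x ^ i)"
  proof (rule sum_strict_mono_ex1)
    show "\<forall>i\<in>{..<k}. y ^ (k - 1) \<le> y ^ (k - Suc i) * x ^ i"
    proof
      fix i assume "i \<in> {..<k}"
      then have "y ^ (k - 1) = y ^ (k - Suc i) * y ^ i" by (simp flip: power_add)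
      also have "\<dots> \<le> y ^ (k - Suc i) * x ^ i"
        using assms by (intro mult_left_mono power_mono) auto
      finally show "y ^ (k - 1) \<le> y ^ (k - Suc i) * x ^ i" .
    qed
    have "y ^ (k - 1) < x ^ (k - 1)"
      using assms by (intro power_strict_mono) auto
    then show "\<exists>i\<in>{..<k}. y ^ (k - 1) < y ^ (k - Suc i) * x ^ i"
      using assms by (intro bexI[of _ "k - 1"]) auto
  qed simp
  then show ?thesis
    using assms by (simp add: power_diff_sumr2 mult_strict_left_mono mult.commute)
qed

lemma power_diff_ge_deriv_second_order:
  fixes x y :: real
  assumes "0 \<le> y" "y \<le> x" "x \<le> 1"
  shows "real k * x ^ (k - 1) * (x - y) - (real k)\<^sup>2 * (x - y)\<^sup>2 \<le> x ^ k - y ^ k"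
proof -
  have "(\<Sum>i<k. x ^ (k - 1) - real k * (x - y)) \<le> (\<Sum>i<k. y ^ (k - Suc i) * x ^ i)"
  proof (rule sum_mono)
    fix i assume i: "i \<in> {..<k}"
    have "x ^ (k - Suc i) - y ^ (k - Suc i) \<le> real (k - Suc i) * x ^ (k - Suc i - 1) * (x - y)"
      using assms by (intro power_diff_le_deriv) auto
    also have "\<dots> \<le> real k * 1 * (x - y)"
      using assms by (intro mult_right_mono mult_mono power_le_one) auto
    finally have "x ^ (k - Suc i) - real k * (x - y) \<le> y ^ (k - Suc i)" by simp
    then have "(x ^ (k - Suc i) - real k * (x - y)) * x ^ i \<le> y ^ (k - Suc i) * x ^ i"
      using assms by (intro mult_right_mono) auto
    moreover have "x ^ (k - 1) - real k * (x - y) \<le> (x ^ (k - Suc i) - real k * (x - y)) * x ^ i"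
    proof -
      have "x ^ (k - 1) = x ^ (k - Suc i) * x ^ i" using i by (simp flip: power_add)
      moreover have "real k * (x - y) * x ^ i \<le> real k * (x - y)"
        using assms by (intro mult_left_le power_le_one) auto
      ultimately show ?thesis by (simp add: algebra_simps)
    qed
    ultimately show "x ^ (k - 1) - real k * (x - y) \<le> y ^ (k - Suc i) * x ^ i" by linarith
  qed
  then have "(x - y) * (real k * (x ^ (k - 1) - real k * (x - y))) \<le> x ^ k - y ^ k"
    using assms by (simp add: power_diff_sumr2 mult_left_mono)
  then show ?thesis by (simp add: algebra_simps power2_eq_square)
qed

lemma sum_power_le_geometric_tail:
  fixes x :: real
  assumes "0 \<le> x" "x < 1"
  shows "(\<Sum>k = J..<h. x ^ k) \<le> x ^ J / (1 - x)"
proof (cases "J \<le> h")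
  case True
  have "(1 - x) * (\<Sum>k = J..<h. x ^ k) = x ^ J - x ^ h"
    using True
  proof (induction h rule: dec_induct)
    case (step n)
    have "(1 - x) * (\<Sum>k = J..<Suc n. x ^ k) = (1 - x) * (\<Sum>k = J..<n. x ^ k) + (1 - x) * x ^ n"
      using step.hyps by (simp add: distrib_left)
    also have "\<dots> = x ^ J - x ^ Suc n" using step.IH by (simp add: algebra_simps)
    finally show ?case .
  qed simp
  then have "(\<Sum>k = J..<h. x ^ k) * (1 - x) \<le> x ^ J"
    using assms by (simp add: mult.commute)
  then show ?thesis using assms by (simp add: pos_le_divide_eq)
next
  case False
  then show ?thesis using assms by simp
qed

lemma weierstrass_product_lower_bound:
  fixes x d :: "nat \<Rightarrow> real"
  assumes "J \<le> h" "0 \<le> x J"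
    and d: "\<And>k. J \<le> k \<Longrightarrow> 0 \<le> d k \<and> d k \<le> 1"
    and step: "\<And>k. J \<le> k \<Longrightarrow> x k * (1 - d k) \<le> x (Suc k)"
  shows "x J * (1 - (\<Sum>k = J..<h. d k)) \<le> x h"
  using assms(1)
proof (induction h rule: dec_induct)
  case (step k)
  have "0 \<le> x J * ((\<Sum>k = J..<k. d k) * d k)"
    using d step.hyps \<open>0 \<le> x J\<close> by (auto intro!: mult_nonneg_nonneg sum_nonneg)
  then have "x J * (1 - (\<Sum>k = J..<Suc k. d k)) \<le> x J * (1 - (\<Sum>k = J..<k. d k)) * (1 - d k)"
    using step.hyps by (simp add: algebra_simps)
  also have "\<dots> \<le> x k * (1 - d k)"
    using step.IH d[of k] step.hyps by (intro mult_right_mono) auto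
  also have "\<dots> \<le> x (Suc k)" using step.hyps by (intro assms(4)) simp
  finally show ?case .
qed simp

lemma filterlim_nat_ceiling_at_top:
  fixes g :: "'a \<Rightarrow> real"
  assumes "filterlim g at_top F"
  shows "filterlim (\<lambda>x. nat \<lceil>g x\<rceil>) at_top F"
  unfolding filterlim_at_top
proof
  fix Z :: nat
  have "\<forall>\<^sub>F x in F. real Z \<le> g x" using assms by (simp add: filterlim_at_top)
  then show "\<forall>\<^sub>F x in F. Z \<le> nat \<lceil>g x\<rceil>"
  proof eventually_elim
    case (elim x)
    then have "real Z \<le> of_int \<lceil>g x\<rceil>" using le_of_int_ceiling order_trans by blast
    then have "int Z \<le> \<lceil>g x\<rceil>" by linarith
    then show ?case by linarith
  qed
qed

section \<open>Generating functions\<close>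

lemma pmf_sums_one: "pmf p sums 1"
proof -
  have "(\<lambda>k. measure (measure_pmf p) {k}) sums measure (measure_pmf p) (\<Union>k. {k})"
    by (rule measure_pmf.finite_measure_UNION) (auto simp: disjoint_family_on_def)
  then show ?thesis by (simp add: measure_pmf_single)
qed

lemma gf_sums: "0 \<le> s \<Longrightarrow> s \<le> 1 \<Longrightarrow> (\<lambda>k. pmf p k * s ^ k) sums gf p s"
  unfolding gf_def
  by (rule summable_sums, rule summable_comparison_test[OF _ sums_summable[OF pmf_sums_one]])
     (auto intro!: exI[of _ 0] mult_right_le_one_le power_le_one simp: abs_mult)

lemma gf_one: "gf p 1 = 1"
  using pmf_sums_one by (simp add: gf_def sums_iff)

lemma gf_zero: "gf p 0 = pmf p 0"
  unfolding gf_def by (rule powser_zero)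

locale finite_second_moment =
  fixes p :: "nat pmf"
  assumes summable_second_moment: "summable (\<lambda>k. (real k)\<^sup>2 * pmf p k)"
begin

definition second_moment :: real where
  "second_moment = (\<Sum>k. (real k)\<^sup>2 * pmf p k)"

lemma second_moment_sums: "(\<lambda>k. (real k)\<^sup>2 * pmf p k) sums second_moment"
  unfolding second_moment_def using summable_second_moment by (rule summable_sums)

lemma second_moment_nonneg: "0 \<le> second_moment"
  unfolding second_moment_def by (rule suminf_nonneg[OF summable_second_moment]) auto

lemma gf_deriv_sums: "0 \<le> s \<Longrightarrow> s \<le> 1 \<Longrightarrow> (\<lambda>k. real k * pmf p k * s ^ (k - 1)) sums gf_deriv p s"
  unfolding gf_deriv_def
proof (rule summable_sums, rule summable_comparison_test[OF _ summable_second_moment])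
  assume s: "0 \<le> s" "s \<le> 1"
  have "real k * pmf p k * s ^ (k - 1) \<le> (real k)\<^sup>2 * pmf p k" for k
  proof -
    have "real k * pmf p k * s ^ (k - 1) \<le> real k * pmf p k"
      using s by (intro mult_left_le power_le_one) auto
    also have "\<dots> \<le> (real k)\<^sup>2 * pmf p k"
      by (intro mult_right_mono) (cases k, auto simp: power2_eq_square)
    finally show ?thesis .
  qed
  then show "\<exists>N. \<forall>k\<ge>N. norm (real k * pmf p k * s ^ (k - 1)) \<le> (real k)\<^sup>2 * pmf p k"
    using s by auto
qed

lemma gf_deriv_one: "gf_deriv p 1 = mean p"
  by (simp add: gf_deriv_def mean_def)

lemma gf_deriv_nonneg:
  assumes "0 \<le> s" "s \<le> 1"
  shows "0 \<le> gf_deriv p s"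
  unfolding gf_deriv_def using assms by (intro suminf_nonneg sums_summable[OF gf_deriv_sums]) auto

lemma mean_le_second_moment: "mean p \<le> second_moment"
proof (rule sums_le[OF _ _ second_moment_sums])
  show "(\<lambda>k. real k * pmf p k) sums mean p"
    using gf_deriv_sums[of 1] gf_deriv_one by simp
  show "real k * pmf p k \<le> (real k)\<^sup>2 * pmf p k" for k
    by (intro mult_right_mono) (cases k, auto simp: power2_eq_square)
qed

lemma gf_diff_le:
  assumes "0 \<le> y" "y \<le> x" "x \<le> 1"
  shows "gf p x - gf p y \<le> gf_deriv p x * (x - y)"
proof (rule sums_le)
  show "(\<lambda>k. pmf p k * x ^ k - pmf p k * y ^ k) sums (gf p x - gf p y)"
    using assms by (intro sums_diff gf_sums) auto
  show "(\<lambda>k. real k * pmf p k * x ^ (k - 1) * (x - y)) sums (gf_deriv p x * (x - y))"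
    using assms by (intro sums_mult2 gf_deriv_sums) auto
  show "pmf p k * x ^ k - pmf p k * y ^ k \<le> real k * pmf p k * x ^ (k - 1) * (x - y)" for k
    using mult_left_mono[OF power_diff_le_deriv[OF assms(1,2), of k], of "pmf p k"]
    by (simp add: algebra_simps)
qed

lemma gf_diff_ge:
  assumes "0 \<le> y" "y \<le> x" "x \<le> 1"
  shows "gf_deriv p y * (x - y) \<le> gf p x - gf p y"
proof (rule sums_le)
  show "(\<lambda>k. pmf p k * x ^ k - pmf p k * y ^ k) sums (gf p x - gf p y)"
    using assms by (intro sums_diff gf_sums) auto
  show "(\<lambda>k. real k * pmf p k * y ^ (k - 1) * (x - y)) sums (gf_deriv p y * (x - y))"
    using assms by (intro sums_mult2 gf_deriv_sums) auto
  show "real k * pmf p k * y ^ (k - 1) * (x - y) \<le> pmf p k * x ^ k - pmf p k * y ^ k" for k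
    using mult_left_mono[OF power_diff_ge_deriv[OF assms(1,2), of k], of "pmf p k"]
    by (simp add: algebra_simps)
qed

lemma gf_diff_ge_second_order:
  assumes "0 \<le> y" "y \<le> x" "x \<le> 1"
  shows "gf_deriv p x * (x - y) - second_moment * (x - y)\<^sup>2 \<le> gf p x - gf p y"
proof (rule sums_le)
  show "(\<lambda>k. pmf p k * x ^ k - pmf p k * y ^ k) sums (gf p x - gf p y)"
    using assms by (intro sums_diff gf_sums) auto
  show "(\<lambda>k. real k * pmf p k * x ^ (k - 1) * (x - y) - (real k)\<^sup>2 * pmf p k * (x - y)\<^sup>2)
          sums (gf_deriv p x * (x - y) - second_moment * (x - y)\<^sup>2)"
    using assms by (intro sums_diff sums_mult2 gf_deriv_sums second_moment_sums) auto
  show "real k * pmf p k * x ^ (k - 1) * (x - y) - (real k)\<^sup>2 * pmf p k * (x - y)\<^sup>2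
          \<le> pmf p k * x ^ k - pmf p k * y ^ k" for k
    using mult_left_mono[OF power_diff_ge_deriv_second_order[OF assms, of k], of "pmf p k"]
    by (simp add: algebra_simps)
qed

lemma gf_mono: "0 \<le> y \<Longrightarrow> y \<le> x \<Longrightarrow> x \<le> 1 \<Longrightarrow> gf p y \<le> gf p x"
  using gf_diff_ge[of y x] gf_deriv_nonneg[of y] by (smt (verit) mult_nonneg_nonneg)

lemma gf_nonneg: "0 \<le> s \<Longrightarrow> s \<le> 1 \<Longrightarrow> 0 \<le> gf p s"
  using gf_mono[of 0 s] gf_zero[of p] pmf_nonneg[of p 0] by linarith

lemma gf_le_one: "0 \<le> s \<Longrightarrow> s \<le> 1 \<Longrightarrow> gf p s \<le> 1"
  using gf_mono[of s 1] gf_one[of p] by simp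

end

section \<open>The supercritical case\<close>

locale supercritical_gw = finite_second_moment +
  fixes q :: real
  assumes pmf_0_pos: "0 < pmf p 0"
    and mean_gt_one: "1 < mean p"
    and gf_iterates_tendsto: "(\<lambda>h. (gf p ^^ h) 0) \<longlonglongrightarrow> q"
begin

abbreviation f :: "real \<Rightarrow> real" where
  "f \<equiv> gf p"

abbreviation \<mu> :: real where
  "\<mu> \<equiv> gf_deriv p q"

abbreviation gap :: "nat \<Rightarrow> real" where
  "gap h \<equiv> q - (f ^^ h) 0"

lemma gf_iterate_nonneg: "0 \<le> (f ^^ h) 0"
  and gf_iterate_le_one: "(f ^^ h) 0 \<le> 1"
  by (induction h) (auto intro: gf_nonneg gf_le_one)

lemma incseq_gf_iterates: "incseq (\<lambda>h. (f ^^ h) 0)"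
proof (rule incseq_SucI)
  show "(f ^^ h) 0 \<le> (f ^^ Suc h) 0" for h
  proof (induction h)
    case (Suc h)
    then show ?case
      using gf_mono[of "(f ^^ h) 0" "(f ^^ Suc h) 0"] gf_iterate_nonneg[of h]
        gf_iterate_le_one[of "Suc h"]
      by simp
  qed (simp add: gf_nonneg)
qed

lemma gf_iterate_le_q: "(f ^^ h) 0 \<le> q"
  by (rule incseq_le[OF incseq_gf_iterates gf_iterates_tendsto])

lemma q_pos: "0 < q"
  using pmf_0_pos gf_iterate_le_q[of 1] by (simp add: gf_zero)

lemma q_le_one: "q \<le> 1"
  using gf_iterate_le_one by (intro LIMSEQ_le_const2[OF gf_iterates_tendsto]) auto

lemma gap_tendsto_zero: "gap \<longlonglongrightarrow> 0"
  using tendsto_diff[OF tendsto_const[of q] gf_iterates_tendsto] by simp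

lemma gf_fixpoint: "f q = q"
proof -
  have "(\<lambda>h. f q - f ((f ^^ h) 0)) \<longlonglongrightarrow> 0"
  proof (rule tendsto_sandwich[of "\<lambda>_. 0" _ _ "\<lambda>h. \<mu> * gap h"])
    show "\<forall>\<^sub>F h in sequentially. 0 \<le> f q - f ((f ^^ h) 0)"
      using gf_mono gf_iterate_nonneg gf_iterate_le_q q_le_one by (simp add: algebra_simps)
    show "\<forall>\<^sub>F h in sequentially. f q - f ((f ^^ h) 0) \<le> \<mu> * gap h"
      using gf_diff_le gf_iterate_nonneg gf_iterate_le_q q_le_one by simp
    show "(\<lambda>h. \<mu> * gap h) \<longlonglongrightarrow> 0"
      using tendsto_mult_right_zero[OF gap_tendsto_zero] by simp
  qed simp
  then have "(\<lambda>h. f ((f ^^ h) 0)) \<longlonglongrightarrow> f q"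
    using tendsto_diff[OF tendsto_const[of "f q"]] by fastforce
  moreover have "(\<lambda>h. f ((f ^^ h) 0)) \<longlonglongrightarrow> q"
    using LIMSEQ_Suc[OF gf_iterates_tendsto] by simp
  ultimately show ?thesis using LIMSEQ_unique by blast
qed

text \<open>Near \<open>1\<close>, \<open>f(1 - s) \<le> 1 - m s + M\<^sub>2 s\<^sup>2 < 1 - s\<close> for \<open>s = (m - 1) / (2 M\<^sub>2)\<close>,
  and \<open>[0, 1 - s]\<close> is invariant under \<open>f\<close>.\<close>

lemma q_lt_one: "q < 1"
proof -
  define s where "s = (mean p - 1) / (2 * second_moment)"
  have M2_pos: "0 < second_moment" using mean_le_second_moment mean_gt_one by simp
  have s: "0 < s" "s \<le> 1 / 2"
    using mean_le_second_moment mean_gt_one M2_pos by (auto simp: s_def field_simps)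
  have "gf_deriv p 1 * (1 - (1 - s)) - second_moment * (1 - (1 - s))\<^sup>2 \<le> f 1 - f (1 - s)"
    using s by (intro gf_diff_ge_second_order) auto
  then have "mean p * s - second_moment * s * s \<le> 1 - f (1 - s)"
    by (simp add: gf_deriv_one gf_one power2_eq_square)
  moreover have "second_moment * s = (mean p - 1) / 2"
    using M2_pos by (simp add: s_def)
  moreover have "s < mean p * s - (mean p - 1) / 2 * s"
  proof -
    have "s * 1 < s * ((mean p + 1) / 2)" using s mean_gt_one by (intro mult_strict_left_mono) auto
    then show ?thesis by (simp add: field_simps)
  qed
  ultimately have f_below: "f (1 - s) < 1 - s" by simp
  have "(f ^^ h) 0 \<le> 1 - s" for h
  proof (induction h)
    case (Suc h)
    have "f ((f ^^ h) 0) \<le> f (1 - s)"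
      using Suc gf_iterate_nonneg s by (intro gf_mono) auto
    then show ?case using f_below by simp
  qed (use s in simp)
  then have "q \<le> 1 - s" by (intro LIMSEQ_le_const2[OF gf_iterates_tendsto]) auto
  then show ?thesis using s by simp
qed

lemma exists_pmf_pos_ge_two: "\<exists>k \<ge> 2. 0 < pmf p k"
proof (rule ccontr)
  assume "\<not> ?thesis"
  then have "pmf p k = 0" if "k \<ge> 2" for k
    using that pmf_nonneg[of p k] by (metis less_eq_real_def)
  then have "mean p = (\<Sum>k\<in>{1}. real k * pmf p k)"
    unfolding mean_def
  proof (intro suminf_finite)
    fix k :: nat assume "k \<notin> {1}"
    then have "k = 0 \<or> 2 \<le> k" by auto
    then show "real k * pmf p k = 0" using \<open>\<And>k. 2 \<le> k \<Longrightarrow> pmf p k = 0\<close> by auto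
  qed simp
  then show False using mean_gt_one pmf_le_1[of p 1] by simp
qed

lemma gf_diff_gt:
  assumes "0 \<le> y" "y < x" "x \<le> 1"
  shows "gf_deriv p y * (x - y) < f x - f y"
proof -
  obtain k0 where k0: "k0 \<ge> 2" "0 < pmf p k0" using exists_pmf_pos_ge_two by blast
  define t where "t k = pmf p k * x ^ k - pmf p k * y ^ k
      - real k * pmf p k * y ^ (k - 1) * (x - y)" for k
  have t_sums: "t sums (f x - f y - gf_deriv p y * (x - y))"
    unfolding t_def using assms by (intro sums_diff sums_mult2 gf_sums gf_deriv_sums) auto
  have "0 < suminf t"
  proof (rule suminf_pos2)
    show "summable t" using t_sums by (rule sums_summable)
    show "0 \<le> t k" for k
      using mult_left_mono[OF power_diff_ge_deriv[of y x k], of "pmf p k"] assms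
      by (simp add: t_def algebra_simps)
    show "0 < t k0"
      using mult_strict_left_mono[OF power_diff_gt_deriv[of y x k0], of "pmf p k0"] assms k0
      by (simp add: t_def algebra_simps)
  qed
  then show ?thesis using sums_unique[OF t_sums] by simp
qed

lemma gf_strict_mono: "0 \<le> y \<Longrightarrow> y < x \<Longrightarrow> x \<le> 1 \<Longrightarrow> f y < f x"
  using gf_diff_gt[of y x] gf_deriv_nonneg[of y] by (smt (verit) mult_nonneg_nonneg)

lemma gf_deriv_q_pos: "0 < \<mu>"
proof -
  obtain k0 where k0: "k0 \<ge> 2" "0 < pmf p k0" using exists_pmf_pos_ge_two by blast
  show ?thesis
    using q_pos q_le_one k0
    by (intro suminf_pos2[OF sums_summable[OF gf_deriv_sums], of _ k0, folded gf_deriv_def]) auto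
qed

lemma gf_deriv_q_lt_one: "\<mu> < 1"
  using gf_diff_gt[of q 1] q_pos q_lt_one by (simp add: gf_one gf_fixpoint)

lemma gap_pos: "0 < gap h"
proof (induction h)
  case (Suc h)
  then have "f ((f ^^ h) 0) < f q"
    using gf_iterate_nonneg q_le_one by (intro gf_strict_mono) auto
  then show ?case by (simp add: gf_fixpoint)
qed (simp add: q_pos)

lemma gap_Suc_le: "gap (Suc h) \<le> \<mu> * gap h"
  using gf_diff_le[of "(f ^^ h) 0" q] gf_iterate_nonneg gf_iterate_le_q q_le_one
  by (simp add: gf_fixpoint)

lemma gap_Suc_ge: "\<mu> * gap h - second_moment * (gap h)\<^sup>2 \<le> gap (Suc h)"
  using gf_diff_ge_second_order[of "(f ^^ h) 0" q] gf_iterate_nonneg gf_iterate_le_q q_le_one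
  by (simp add: gf_fixpoint)

lemma gap_le_geometric: "gap h \<le> q * \<mu> ^ h"
proof (induction h)
  case (Suc h)
  have "gap (Suc h) \<le> \<mu> * gap h" by (rule gap_Suc_le)
  also have "\<dots> \<le> \<mu> * (q * \<mu> ^ h)" using Suc gf_deriv_q_pos by (intro mult_left_mono) auto
  finally show ?case by (simp add: algebra_simps)
qed simp

definition survives_K0_ge_prob :: "nat \<Rightarrow> real" where
  "survives_K0_ge_prob h = 1 - f q - f (1 - gap h) + (f ^^ Suc h) 0"

lemma survives_K0_ge_prob_approx:
  "\<bar>survives_K0_ge_prob h - (mean p - \<mu>) * gap h\<bar>
    \<le> second_moment * (gap h)\<^sup>2"
proof -
  have r: "0 \<le> (f ^^ h) 0" "(f ^^ h) 0 \<le> q" "q \<le> 1"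
    using gf_iterate_nonneg gf_iterate_le_q q_le_one by auto
  have "survives_K0_ge_prob h = (f 1 - f (1 - gap h)) - (f q - f ((f ^^ h) 0))"
    by (simp add: survives_K0_ge_prob_def gf_one gf_fixpoint)
  moreover have "mean p * gap h - second_moment * (gap h)\<^sup>2 \<le> f 1 - f (1 - gap h)"
    using gf_diff_ge_second_order[of "1 - gap h" 1] r by (simp add: gf_deriv_one)
  moreover have "f 1 - f (1 - gap h) \<le> mean p * gap h"
    using gf_diff_le[of "1 - gap h" 1] r by (simp add: gf_deriv_one)
  moreover have "\<mu> * gap h - second_moment * (gap h)\<^sup>2 \<le> f q - f ((f ^^ h) 0)"
    using gf_diff_ge_second_order[of "(f ^^ h) 0" q] r by simp
  moreover have "f q - f ((f ^^ h) 0) \<le> \<mu> * gap h"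
    using gf_diff_le[of "(f ^^ h) 0" q] r by simp
  ultimately show ?thesis by (simp add: abs_le_iff algebra_simps)
qed

lemma survives_K0_ge_prob_over_gap_tendsto: "(\<lambda>h. survives_K0_ge_prob h / gap h) \<longlonglongrightarrow> mean p - \<mu>"
proof -
  have "(\<lambda>h. survives_K0_ge_prob h / gap h - (mean p - \<mu>)) \<longlonglongrightarrow> 0"
  proof (rule Lim_null_comparison)
    show "(\<lambda>h. second_moment * gap h) \<longlonglongrightarrow> 0"
      using tendsto_mult_right_zero[OF gap_tendsto_zero] by simp
    have "\<bar>survives_K0_ge_prob h / gap h - (mean p - \<mu>)\<bar> \<le> second_moment * gap h" for h
    proof -
      have "\<bar>survives_K0_ge_prob h / gap h - (mean p - \<mu>)\<bar>
          = \<bar>survives_K0_ge_prob h - (mean p - \<mu>) * gap h\<bar> / gap h"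
        using gap_pos[of h] by (simp add: field_simps)
      also have "\<dots> \<le> second_moment * (gap h)\<^sup>2 / gap h"
        using survives_K0_ge_prob_approx gap_pos[of h] by (intro divide_right_mono) auto
      finally show ?thesis using gap_pos[of h] by (simp add: power2_eq_square)
    qed
    then show "\<forall>\<^sub>F h in sequentially. norm (survives_K0_ge_prob h / gap h - (mean p - \<mu>))
        \<le> second_moment * gap h"
      by simp
  qed
  then show ?thesis by (simp add: LIM_zero_iff)
qed

lemma scaled_gap_Suc_ge:
  "gap h / \<mu> ^ h * (1 - second_moment * q / \<mu> * \<mu> ^ h) \<le> gap (Suc h) / \<mu> ^ Suc h"
proof -
  have "second_moment * (gap h)\<^sup>2 \<le> second_moment * gap h * (q * \<mu> ^ h)"
    using gap_le_geometric[of h] gap_pos[of h] second_moment_nonneg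
    by (simp add: power2_eq_square mult.assoc mult_left_mono)
  then have "(\<mu> * gap h - second_moment * gap h * (q * \<mu> ^ h)) / \<mu> ^ Suc h
      \<le> gap (Suc h) / \<mu> ^ Suc h"
    using gap_Suc_ge[of h] gf_deriv_q_pos by (intro divide_right_mono) auto
  then show ?thesis using gf_deriv_q_pos by (simp add: field_simps)
qed

text \<open>By \<open>scaled_gap_Suc_ge\<close>, \<open>gap h / \<mu>\<^sup>h\<close> shrinks at most by the factors \<open>1 - c \<mu>\<^sup>h\<close>, whose
  product over \<open>h \<ge> J\<close> is at least \<open>1/2\<close> once the tail sum \<open>c \<mu>\<^sup>J / (1 - \<mu>)\<close> is at most \<open>1/2\<close>.\<close>

lemma scaled_gap_bounded_below: "\<exists>J. \<forall>h \<ge> J. gap J / \<mu> ^ J / 2 \<le> gap h / \<mu> ^ h"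
proof -
  define c where "c = second_moment * q / \<mu>"
  have c: "0 \<le> c" using second_moment_nonneg q_pos gf_deriv_q_pos by (simp add: c_def)
  have "(\<lambda>J. c * \<mu> ^ J / (1 - \<mu>)) \<longlonglongrightarrow> c * 0 / (1 - \<mu>)"
    using gf_deriv_q_pos gf_deriv_q_lt_one by (intro tendsto_intros LIMSEQ_power_zero) auto
  then obtain J where J: "c * \<mu> ^ J / (1 - \<mu>) < 1 / 2"
    using order_tendstoD(2)[of _ 0 sequentially "1 / 2"] eventually_sequentially by force
  have small: "0 \<le> c * \<mu> ^ k \<and> c * \<mu> ^ k \<le> 1" if "J \<le> k" for k
  proof -
    have "c * \<mu> ^ k \<le> c * \<mu> ^ J"
      using c that gf_deriv_q_pos gf_deriv_q_lt_one by (intro mult_left_mono power_decreasing) auto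
    also have "\<dots> \<le> c * \<mu> ^ J / (1 - \<mu>)"
      using c gf_deriv_q_pos gf_deriv_q_lt_one by (simp add: le_divide_eq mult_left_le)
    moreover have "0 \<le> c * \<mu> ^ k" using c gf_deriv_q_pos by simp
    ultimately show ?thesis using J by linarith
  qed
  have "gap J / \<mu> ^ J / 2 \<le> gap h / \<mu> ^ h" if "J \<le> h" for h
  proof -
    have "(\<Sum>k = J..<h. c * \<mu> ^ k) \<le> c * (\<mu> ^ J / (1 - \<mu>))"
      unfolding sum_distrib_left[symmetric]
      using c gf_deriv_q_pos gf_deriv_q_lt_one
      by (intro mult_left_mono sum_power_le_geometric_tail) auto
    then have "(\<Sum>k = J..<h. c * \<mu> ^ k) \<le> 1 / 2" using J unfolding times_divide_eq_right by linarith
    then have "gap J / \<mu> ^ J * (1 - 1 / 2) \<le> gap J / \<mu> ^ J * (1 - (\<Sum>k = J..<h. c * \<mu> ^ k))"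
      using gap_pos[of J] gf_deriv_q_pos by (intro mult_left_mono) auto
    then have "gap J / \<mu> ^ J / 2 \<le> gap J / \<mu> ^ J * (1 - (\<Sum>k = J..<h. c * \<mu> ^ k))"
      by simp
    also have "\<dots> \<le> gap h / \<mu> ^ h"
      using that small scaled_gap_Suc_ge gap_pos[of J] gf_deriv_q_pos
      by (intro weierstrass_product_lower_bound[where x = "\<lambda>h. gap h / \<mu> ^ h"]) (auto simp: c_def)
    finally show ?thesis .
  qed
  then show ?thesis by blast
qed

lemma survives_K0_ge_prob_asymp:
  assumes scaled_gap: "(\<lambda>h. gap h / q / \<mu> ^ h) \<longlonglongrightarrow> \<alpha>"
  shows "(\<lambda>h. (survives_K0_ge_prob h / (1 - q)) / ((\<alpha> * q * (mean p - \<mu>) / (1 - q)) * \<mu> ^ h)) \<longlonglongrightarrow> 1"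
proof -
  have lim: "(\<lambda>h. gap h / \<mu> ^ h) \<longlonglongrightarrow> q * \<alpha>"
    using tendsto_mult_left[OF scaled_gap, of q] q_pos by simp
  obtain J where J: "\<forall>h \<ge> J. gap J / \<mu> ^ J / 2 \<le> gap h / \<mu> ^ h"
    using scaled_gap_bounded_below by blast
  have "gap J / \<mu> ^ J / 2 \<le> q * \<alpha>"
    using J by (intro LIMSEQ_le_const[OF lim]) auto
  moreover have "0 < gap J / \<mu> ^ J" using gap_pos gf_deriv_q_pos by simp
  ultimately have q\<alpha>: "0 < q * \<alpha>" by simp
  have m\<mu>: "0 < mean p - \<mu>" using gf_deriv_q_lt_one mean_gt_one by simp
  have rearrange: "(t / g) * (g / u) / (d * (q * \<alpha>)) = (t / r) / ((\<alpha> * q * d / r) * u)"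
    if "g \<noteq> 0" "u \<noteq> 0" "d \<noteq> 0" "r \<noteq> 0" for t g u d r
    using that q\<alpha> by (simp add: field_simps)
  have ratio_eq: "(survives_K0_ge_prob h / gap h) * (gap h / \<mu> ^ h) / ((mean p - \<mu>) * (q * \<alpha>)) =
      (survives_K0_ge_prob h / (1 - q)) / ((\<alpha> * q * (mean p - \<mu>) / (1 - q)) * \<mu> ^ h)" for h
    using gap_pos[of h] gf_deriv_q_pos q_lt_one m\<mu> by (intro rearrange) auto
  have one: "(mean p - \<mu>) * (q * \<alpha>) / ((mean p - \<mu>) * (q * \<alpha>)) = 1"
    using q\<alpha> m\<mu> by (intro divide_self) auto
  have "(\<lambda>h. (survives_K0_ge_prob h / gap h) * (gap h / \<mu> ^ h) / ((mean p - \<mu>) * (q * \<alpha>)))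
          \<longlonglongrightarrow> (mean p - \<mu>) * (q * \<alpha>) / ((mean p - \<mu>) * (q * \<alpha>))"
    using q\<alpha> m\<mu> by (intro tendsto_intros survives_K0_ge_prob_over_gap_tendsto lim) auto
  then show ?thesis unfolding ratio_eq one .
qed

lemma pmf_Qlaw:
  assumes "q = ext_prob p"
  shows "pmf (Qlaw p) k = pmf p k * q ^ k / q"
proof -
  have pos: "0 \<le> pmf p k * q ^ k / q" for k using q_pos by simp
  have "(\<lambda>k. pmf p k * q ^ k / q) sums (f q / q)"
    using q_pos q_le_one by (intro sums_divide gf_sums) auto
  then have "(\<Sum>k. ennreal (pmf p k * q ^ k / q)) = 1"
    using pos q_pos by (subst suminf_ennreal2) (auto simp: sums_iff gf_fixpoint)
  then have "(\<integral>\<^sup>+k. ennreal (pmf p k * q ^ k / q) \<partial>count_space UNIV) = 1"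
    by (simp add: nn_integral_count_space_nat)
  moreover have "q powi (int k - 1) = q ^ k / q" for k
    using q_pos by (simp add: power_int_diff)
  ultimately show ?thesis
    unfolding Qlaw_def assms[symmetric] using pos by (simp add: pmf_embed_pmf)
qed

lemma gf_Qlaw:
  assumes "q = ext_prob p" "0 \<le> s" "s \<le> 1"
  shows "gf (Qlaw p) s = f (q * s) / q"
proof -
  have "(\<lambda>k. pmf p k * (q * s) ^ k / q) sums (f (q * s) / q)"
    using q_pos q_le_one assms by (intro sums_divide gf_sums) (auto intro: mult_le_one)
  moreover have "pmf (Qlaw p) k * s ^ k = pmf p k * (q * s) ^ k / q" for k
    by (simp add: pmf_Qlaw[OF assms(1)] power_mult_distrib)
  ultimately show ?thesis
    unfolding gf_def by (simp add: sums_iff)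
qed

lemma gf_Qlaw_iterate:
  assumes "q = ext_prob p"
  shows "(gf (Qlaw p) ^^ h) 0 = (f ^^ h) 0 / q"
proof (induction h)
  case (Suc h)
  have "0 \<le> (f ^^ h) 0 / q" "(f ^^ h) 0 / q \<le> 1"
    using gf_iterate_nonneg gf_iterate_le_q q_pos by auto
  then show ?case using Suc q_pos by (simp add: gf_Qlaw[OF assms])
qed simp

lemma K0_tail_asymp:
  assumes q: "q = ext_prob p"
    and alpha: "(\<lambda>h. measure (gw_space (Qlaw p))
                    {\<omega> \<in> space (gw_space (Qlaw p)). enat h \<le> tree_height \<omega>} / \<mu> ^ h)
                  \<longlonglongrightarrow> \<alpha>"
  shows "(\<lambda>h. Pcond p {\<omega> \<in> space (gw_space p). ereal (real h) \<le> K0 \<omega>} /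
            ((\<alpha> * q * (mean p - \<mu>) / (1 - q)) * \<mu> ^ h)) \<longlonglongrightarrow> 1"
proof -
  have "measure (gw_space (Qlaw p)) {\<omega> \<in> space (gw_space (Qlaw p)). enat h \<le> tree_height \<omega>}
      = gap h / q" for h
    using q_pos by (subst measure_tree_height_ge) (simp add: gf_Qlaw_iterate[OF q] field_simps)
  then have "(\<lambda>h. gap h / q / \<mu> ^ h) \<longlonglongrightarrow> \<alpha>" using alpha by simp
  moreover have "Pcond p {\<omega> \<in> space (gw_space p). ereal (real h) \<le> K0 \<omega>}
      = survives_K0_ge_prob h / (1 - q)" for h
  proof -
    have "{\<omega> \<in> space (gw_space p). ereal (real h) \<le> K0 \<omega>} \<inter> {\<omega> \<in> space (gw_space p). survives \<omega>} =
        {\<omega>. survives \<omega> \<and> ereal (real h) \<le> K0 \<omega>}"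
      by auto
    then show ?thesis
      unfolding Pcond_def measure_survives
        by (simp add: measure_survives_K0_ge survives_K0_ge_prob_def flip: q)
  qed
  ultimately show ?thesis using survives_K0_ge_prob_asymp by simp
qed

end

theorem lemma5:
  fixes p :: "nat pmf" and \<epsilon> \<alpha> :: real
  assumes p0: "pmf p 0 > 0"
    and m_gt: "mean p > 1"
    and second_moment: "summable (\<lambda>k. (real k)\<^sup>2 * pmf p k)"
    and eps: "0 < \<epsilon>" "\<epsilon> < 1"
    and alpha: "(\<lambda>n. measure (gw_space (Qlaw p))
                    {\<omega> \<in> space (gw_space (Qlaw p)). tree_height \<omega> \<ge> enat n}
                  / gf_deriv p (ext_prob p) ^ n) \<longlonglongrightarrow> \<alpha>"
  shows "(\<lambda>n::nat. Pcond p {\<omega> \<in> space (gw_space p).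
            K0 \<omega> \<ge> ereal (real (nat \<lceil>(1 - \<epsilon>) * ln (real n) / (- ln (gf_deriv p (ext_prob p)))\<rceil>))})
         \<sim>[at_top]
         (\<lambda>n::nat. (\<alpha> * ext_prob p * (mean p - gf_deriv p (ext_prob p)) / (1 - ext_prob p))
            * gf_deriv p (ext_prob p) ^ nat \<lceil>(1 - \<epsilon>) * ln (real n) / (- ln (gf_deriv p (ext_prob p)))\<rceil>)"
proof -
  interpret supercritical_gw p "ext_prob p"
    using second_moment p0 m_gt gf_iterates_tendsto_ext_prob by unfold_locales
  have "0 < (1 - \<epsilon>) / - ln \<mu>"
    using eps ln_less_zero[OF gf_deriv_q_pos gf_deriv_q_lt_one] by (intro divide_pos_pos) auto
  then have "filterlim (\<lambda>n::nat. (1 - \<epsilon>) / - ln \<mu> * ln (real n)) at_top sequentially"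
    by (intro filterlim_tendsto_pos_mult_at_top[OF tendsto_const]
        filterlim_compose[OF ln_at_top filterlim_real_sequentially])
  then have "filterlim (\<lambda>n::nat. nat \<lceil>(1 - \<epsilon>) * ln (real n) / - ln \<mu>\<rceil>) at_top sequentially"
    by (intro filterlim_nat_ceiling_at_top) (simp add: field_simps)
  with K0_tail_asymp[OF refl alpha] show ?thesis
    by (intro asymp_equivI') (rule filterlim_compose)
qed

end
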